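(* Let $\mathcal{W}=(A,\to,\mathbb{S},\mathsf{f}_{\mathtt{NF}},\mathsf{Aggr})$ be a wARS, let $a\in A$, let $\Psi\subseteq\Theta\subseteq\Phi(a)$, and let $n\le m$ be natural numbers. Then $$\mathbf{0}\preccurlyeq\bigsqcup\{[\![\mathfrak{T}|_{n'}]\!]\mid\mathfrak{T}\in\Psi,\ n'\le n\}\preccurlyeq\bigsqcup\{[\![\mathfrak{T}|_{m'}]\!]\mid\mathfrak{T}\in\Theta,\ m'\le m\}\preccurlyeq[\![a]\!].$$
   Context: A semiring $\mathbb{S}=(S,\oplus,\odot,\mathbf{0},\mathbf{1})$: $(S,\oplus,\mathbf{0})$ commutative monoid, $(S,\odot,\mathbf{1})$ monoid, $\odot$ distributes over $\oplus$, $\mathbf{0}$ annihilator. Natural order: $s\preccurlyeq t$ iff $s\oplus u=t$ for some $u$. A complete lattice semiring is one where $\preccurlyeq$ is antisymmetric and every subset $T\subseteq S$ has a least upper bound $\bigsqcup T$. Infinite sums/products are suprema of finite partial sums/products. $\mathrm{Seq}(X)$: non-empty finite or infinite sequences over $X$. An sARS is $(A,\to)$ with $\to\subseteq A\times\mathrm{Seq}(A)$; $\mathtt{NF}_\to$ is the set of $a$ with no $B$ such that $a\to B$. An $(A,\to)$-reduction tree (RT) is a labeled ordered tree whose nodes $v$ carry labels $a_v\in A$ and whose ordered child sequence $vE$ is either empty or satisfies $a_v\to[a_w\mid w\in vE]$. For an RT $\mathfrak{T}$ and $n\ge0$, $\mathfrak{T}|_n$ is the tree obtained by removing all nodes of depth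 $>n$. Aggregators: smallest set containing constants $s\in S$, variables $v_1,v_2,\dots$, and $\bigoplus F$, $\bigodot F$ for non-empty finite or infinite sequences $F$ of aggregators; they induce functions by substituting the $i$-th argument for $v_i$. A wARS $(A,\to,\mathbb{S},\mathsf{f}_{\mathtt{NF}},\mathsf{Aggr})$ consists of an sARS, a complete lattice semiring $\mathbb{S}$, a map $\mathsf{f}_{\mathtt{NF}}:\mathtt{NF}_\to\to S$, and for each $a\to B$ an aggregator $\mathsf{Aggr}_{a\to B}$ with variable indices $\le|B|$, viewed as a function $S^{|B|}\to S$. Weight of a finite-depth RT $\mathfrak{T}$ at node $v$: $\mathsf{f}_{\mathtt{NF}}(a_v)$ if $a_v\in\mathtt{NF}_\to$; $\mathbf{0}$ if $v$ is a leaf with $a_v\notin\mathtt{NF}_\to$; $\mathsf{Aggr}_{a_v\to B}[$weights of the children in order$]$ with $B=[a_w\mid w\in vE]$ otherwise; $[\![\mathfrak{T}]\!]$ is the weight at the root. $\Phi(a)$ is the set of all finite-depth RTs with root labeled $a$, and $[\![a]\!]=\bigsqcup\{[\![\mathfrak{T}]\!]\mid\mathfrak{T}\in\Phi(a)\}$. *)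

theory Defs
  imports Main "HOL-Library.Extended_Nat"
begin

datatype 'a seq = SFin "'a list" | SInf "nat \<Rightarrow> 'a"

fun seq_len :: "'a seq \<Rightarrow> enat" where
  "seq_len (SFin xs) = enat (length xs)"
| "seq_len (SInf f) = \<infinity>"

text \<open>0-indexed access\<close>
fun seq_nth :: "'a seq \<Rightarrow> nat \<Rightarrow> 'a" where
  "seq_nth (SFin xs) i = xs ! i"
| "seq_nth (SInf f) i = f i"

fun seq_all :: "bool seq \<Rightarrow> bool" where
  "seq_all (SFin xs) = (\<forall>x\<in>set xs. x)"
| "seq_all (SInf f) = (\<forall>i. f i)"

record 's srng =
  sadd :: "'s \<Rightarrow> 's \<Rightarrow> 's"
  smul :: "'s \<Rightarrow> 's \<Rightarrow> 's"
  szero :: 's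
  sone :: 's

definition semiring :: "'s srng \<Rightarrow> bool" where
  "semiring S \<longleftrightarrow>
     (\<forall>x y z. sadd S (sadd S x y) z = sadd S x (sadd S y z)) \<and>
     (\<forall>x y. sadd S x y = sadd S y x) \<and>
     (\<forall>x. sadd S (szero S) x = x) \<and>
     (\<forall>x y z. smul S (smul S x y) z = smul S x (smul S y z)) \<and>
     (\<forall>x. smul S (sone S) x = x \<and> smul S x (sone S) = x) \<and>
     (\<forall>x y z. smul S x (sadd S y z) = sadd S (smul S x y) (smul S x z)) \<and>
     (\<forall>x y z. smul S (sadd S x y) z = sadd S (smul S x z) (smul S y z)) \<and>
     (\<forall>x. smul S (szero S) x = szero S \<and> smul S x (szero S) = szero S)"

definition nle :: "'s srng \<Rightarrow> 's \<Rightarrow> 's \<Rightarrow> bool" where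
  "nle S s t \<longleftrightarrow> (\<exists>u. sadd S s u = t)"

definition is_lub :: "'s srng \<Rightarrow> 's set \<Rightarrow> 's \<Rightarrow> bool" where
  "is_lub S T x \<longleftrightarrow> (\<forall>t\<in>T. nle S t x) \<and> (\<forall>y. (\<forall>t\<in>T. nle S t y) \<longrightarrow> nle S x y)"

definition slub :: "'s srng \<Rightarrow> 's set \<Rightarrow> 's" where
  "slub S T = (THE x. is_lub S T x)"

definition complete_lattice_semiring :: "'s srng \<Rightarrow> bool" where
  "complete_lattice_semiring S \<longleftrightarrow> semiring S \<and>
     (\<forall>s t. nle S s t \<and> nle S t s \<longrightarrow> s = t) \<and>
     (\<forall>T. \<exists>x. is_lub S T x)"

fun bigsum :: "'s srng \<Rightarrow> 's seq \<Rightarrow> 's" where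
  "bigsum S (SFin xs) = foldr (sadd S) xs (szero S)"
| "bigsum S (SInf f) = slub S {foldr (sadd S) (map f [0..<k]) (szero S) | k. 1 \<le> k}"

fun bigprod :: "'s srng \<Rightarrow> 's seq \<Rightarrow> 's" where
  "bigprod S (SFin xs) = foldr (smul S) xs (sone S)"
| "bigprod S (SInf f) = slub S {foldr (smul S) (map f [0..<k]) (sone S) | k. 1 \<le> k}"

datatype 's aggr = AConst 's | AVar nat | ASum "'s aggr seq" | AProd "'s aggr seq"

text \<open>Well-formedness: variables are v_1 .. v_k, sequences are non-empty.\<close>
primrec aggr_ok :: "enat \<Rightarrow> 's aggr \<Rightarrow> bool" where
  "aggr_ok k (AConst s) = True"
| "aggr_ok k (AVar i) = (1 \<le> i \<and> enat i \<le> k)"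
| "aggr_ok k (ASum F) = (0 < seq_len F \<and> seq_all (map_seq (aggr_ok k) F))"
| "aggr_ok k (AProd F) = (0 < seq_len F \<and> seq_all (map_seq (aggr_ok k) F))"

text \<open>Evaluation; env i is the value substituted for v_i.\<close>
primrec aeval :: "'s srng \<Rightarrow> (nat \<Rightarrow> 's) \<Rightarrow> 's aggr \<Rightarrow> 's" where
  "aeval S env (AConst s) = s"
| "aeval S env (AVar i) = env i"
| "aeval S env (ASum F) = bigsum S (map_seq (aeval S env) F)"
| "aeval S env (AProd F) = bigprod S (map_seq (aeval S env) F)"

text \<open>The carrier A is the type 'a.\<close>
record ('a, 's) wars =
  red :: "'a \<Rightarrow> 'a seq \<Rightarrow> bool"
  wS :: "'s srng"
  fNF :: "'a \<Rightarrow> 's"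
  Aggr :: "'a \<Rightarrow> 'a seq \<Rightarrow> 's aggr"

definition is_wars :: "('a, 's) wars \<Rightarrow> bool" where
  "is_wars W \<longleftrightarrow> complete_lattice_semiring (wS W) \<and>
     (\<forall>a B. red W a B \<longrightarrow> 0 < seq_len B \<and> aggr_ok (seq_len B) (Aggr W a B))"

definition NF :: "('a, 's) wars \<Rightarrow> 'a set" where
  "NF W = {a. \<not> (\<exists>B. red W a B)}"

datatype 'a rtree = RNode 'a "'a rtree seq"

primrec label :: "'a rtree \<Rightarrow> 'a" where
  "label (RNode a cs) = a"

definition seq_empty :: "'a seq \<Rightarrow> bool" where
  "seq_empty cs \<longleftrightarrow> seq_len cs = 0"

primrec is_rt :: "('a, 's) wars \<Rightarrow> 'a rtree \<Rightarrow> bool" where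
  "is_rt W (RNode a cs) =
     ((seq_empty cs \<or> red W a (map_seq label cs)) \<and> seq_all (map_seq (is_rt W) cs))"

text \<open>Depth of a tree = maximal depth of its nodes (root has depth 0).\<close>
primrec depth :: "'a rtree \<Rightarrow> enat" where
  "depth (RNode a cs) = (if seq_empty cs then 0 else 1 + Sup (set_seq (map_seq depth cs)))"

fun trunc :: "nat \<Rightarrow> 'a rtree \<Rightarrow> 'a rtree" where
  "trunc 0 (RNode a cs) = RNode a (SFin [])"
| "trunc (Suc n) (RNode a cs) = RNode a (map_seq (trunc n) cs)"

primrec weight :: "('a, 's) wars \<Rightarrow> 'a rtree \<Rightarrow> 's" where
  "weight W (RNode a cs) =
     (if a \<in> NF W then fNF W a
      else if seq_empty cs then szero (wS W)
      else aeval (wS W) (\<lambda>i. seq_nth (map_seq (weight W) cs) (i - 1)) (Aggr W a (map_seq label cs)))"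

definition Phi :: "('a, 's) wars \<Rightarrow> 'a \<Rightarrow> 'a rtree set" where
  "Phi W a = {T. is_rt W T \<and> depth T \<noteq> \<infinity> \<and> label T = a}"

definition sem :: "('a, 's) wars \<Rightarrow> 'a \<Rightarrow> 's" where
  "sem W a = slub (wS W) (weight W ` Phi W a)"

end

theory Submission
  imports Defs
begin

text \<open>A truncation of a finite-depth reduction tree is again a finite-depth reduction tree
  with the same root, so every weight occurring in the truncation suprema is the weight of a
  tree in \<open>Phi W a\<close>. The claim then reduces to two facts about the natural order of a
  complete lattice semiring: \<open>\<zero>\<close> is least, and suprema are monotone under inclusion.\<close>

lemma seq_len_map_seq [simp]: "seq_len (map_seq f cs) = seq_len cs"
  by (cases cs) auto

lemma seq_empty_map_seq [simp]: "seq_empty (map_seq f cs) = seq_empty cs"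
  by (simp add: seq_empty_def)

lemma label_trunc [simp]: "label (trunc n t) = label t"
  by (cases n; cases t) auto

lemma is_rt_trunc: "is_rt W t \<Longrightarrow> is_rt W (trunc n t)"
proof (induction n arbitrary: t)
  case 0
  then show ?case by (cases t) (auto simp: seq_empty_def zero_enat_def)
next
  case (Suc n)
  obtain a cs where t: "t = RNode a cs" by (cases t)
  have "map_seq label (map_seq (trunc n) cs) = map_seq label cs"
    by (simp add: seq.map_comp comp_def)
  moreover have "seq_all (map_seq (is_rt W) (map_seq (trunc n) cs))"
    using Suc.prems Suc.IH unfolding t by (cases cs) (auto simp: comp_def)
  ultimately show ?case using Suc.prems unfolding t by auto
qed

lemma depth_trunc_le: "depth (trunc n t) \<le> enat n"
proof (induction n arbitrary: t)
  case 0
  then show ?case by (cases t) (auto simp: seq_empty_def zero_enat_def)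
next
  case (Suc n)
  obtain a cs where t: "t = RNode a cs" by (cases t)
  have "Sup (set_seq (map_seq depth (map_seq (trunc n) cs))) \<le> enat n"
    using Suc.IH by (auto simp: seq.set_map intro!: Sup_least)
  then have "1 + Sup (set_seq (map_seq depth (map_seq (trunc n) cs))) \<le> 1 + enat n"
    by (rule add_left_mono)
  then show ?case unfolding t by (auto simp: eSuc_enat[symmetric] plus_1_eSuc)
qed

lemma trunc_in_Phi:
  assumes "T \<in> Phi W a"
  shows "trunc n T \<in> Phi W a"
proof -
  have "depth (trunc n T) \<noteq> \<infinity>"
    using depth_trunc_le[of n T] by (cases "depth (trunc n T)") auto
  with assms show ?thesis
    using is_rt_trunc[of W T n] by (simp add: Phi_def)
qed

lemma semiring_zero_nle: "semiring S \<Longrightarrow> nle S (szero S) s"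
  unfolding semiring_def nle_def by blast

lemma is_lub_slub:
  assumes "complete_lattice_semiring S"
  shows "is_lub S T (slub S T)"
proof -
  from assms obtain x where x: "is_lub S T x"
    unfolding complete_lattice_semiring_def by blast
  have antisym: "\<And>s t. nle S s t \<Longrightarrow> nle S t s \<Longrightarrow> s = t"
    using assms unfolding complete_lattice_semiring_def by blast
  have "y = x" if "is_lub S T y" for y
    using that x by (intro antisym) (simp_all add: is_lub_def)
  with x show ?thesis
    unfolding slub_def by (rule theI)
qed

lemma slub_mono:
  assumes "complete_lattice_semiring S" and "T1 \<subseteq> T2"
  shows "nle S (slub S T1) (slub S T2)"
  using is_lub_slub[OF assms(1), of T1] is_lub_slub[OF assms(1), of T2] assms(2)
  unfolding is_lub_def by blast

theorem corollary36:
  fixes W :: "('a, 's) wars" and a :: 'a and \<Psi> \<Theta> :: "'a rtree set" and n m :: nat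
  assumes "is_wars W"
    and "\<Psi> \<subseteq> \<Theta>" and "\<Theta> \<subseteq> Phi W a"
    and "n \<le> m"
  shows "nle (wS W) (szero (wS W))
           (slub (wS W) {weight W (trunc n' T) | T n'. T \<in> \<Psi> \<and> n' \<le> n})
       \<and> nle (wS W)
           (slub (wS W) {weight W (trunc n' T) | T n'. T \<in> \<Psi> \<and> n' \<le> n})
           (slub (wS W) {weight W (trunc m' T) | T m'. T \<in> \<Theta> \<and> m' \<le> m})
       \<and> nle (wS W)
           (slub (wS W) {weight W (trunc m' T) | T m'. T \<in> \<Theta> \<and> m' \<le> m})
           (sem W a)"
proof -
  have lattice: "complete_lattice_semiring (wS W)"
    using assms(1) unfolding is_wars_def by blast
  then have "semiring (wS W)"
    unfolding complete_lattice_semiring_def by blast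
  moreover have "{weight W (trunc n' T) | T n'. T \<in> \<Psi> \<and> n' \<le> n}
      \<subseteq> {weight W (trunc m' T) | T m'. T \<in> \<Theta> \<and> m' \<le> m}"
    using assms(2,4) by (auto 0 3)
  moreover have "{weight W (trunc m' T) | T m'. T \<in> \<Theta> \<and> m' \<le> m} \<subseteq> weight W ` Phi W a"
    using assms(3) by (blast intro: trunc_in_Phi)
  ultimately show ?thesis
    unfolding sem_def by (intro conjI semiring_zero_nle slub_mono[OF lattice])
qed

end
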